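(* In the setting below, suppose the persistent excitation assumption and the inexact disturbance bound assumption hold, and let $\Theta_t=\Theta_0\cap\bigcap_{j=1}^t\Delta_j$. Then for every $\epsilon>0$, every $\theta\in\Theta_0$ with $\|\theta-\theta^\ast\|\ge\epsilon+\rho\sqrt{N_u/\beta}$, and every $t\in\mathbb{N}_{\ge0}$, $$\Pr\{\theta\in\Theta_t\}\ \le\ \Bigl[1-p_w\bigl(\epsilon\sqrt{\beta/N_u}\bigr)\Bigr]^{\lfloor t/N_u\rfloor}.$$
   Context: Setting: $\theta^\ast\in\mathbb{R}^p$ is a fixed (unknown) parameter vector. $\Theta_0\subset\mathbb{R}^p$ is a compact convex polytope containing $\theta^\ast$. $\mathcal{W}=\{w\in\mathbb{R}^{n_x}:\Pi_w w\le\pi_w\}$ is a compact convex polytope with $\pi_w>0$. The disturbances $w_0,w_1,\dots$ are independent random vectors in $\mathbb{R}^{n_x}$. $D_0,D_1,\dots\in\mathbb{R}^{n_x\times p}$ is a given (non-random) sequence of regressor matrices. For $t\ge1$ the (random) unfalsified parameter set is $\Delta_t=\{\theta\in\mathbb{R}^p: D_{t-1}(\theta^\ast-\theta)+w_{t-1}\in\mathcal{W}\}$. $\|\cdot\|$ is the Euclidean norm (induced 2-norm for matrices); $\mathcal{B}=\{x\in\mathbb{R}^{n_x}:\|x\|\le1\}$; $\oplus$ is Minkowski sum. Persistent excitation assumption: there exist $\tau>0$, $\beta>0$ and an integer $N_u\ge\lceil p/n_x\rceil$ such that for every $t\ge0$, $\|D_t\|\le\tau$ and $\sum_{j=t}^{t+N_u-1}D_j^\top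 D_j\succeq\beta I$. Inexact disturbance bound assumption: there exist a compact set $\Omega\subset\mathbb{R}^{n_x}$ and $\rho>0$ with $\Omega\subseteq\mathcal{W}\subseteq\Omega\oplus\rho\mathcal{B}$, such that $w_t\in\Omega$ for all $t$, and a function $p_w:(0,\infty)\to(0,1]$ such that for all $w^0\in\partial\Omega$ (boundary of $\Omega$), all $\epsilon>0$ and all $t\ge0$, $\Pr\{\|w_t-w^0\|<\epsilon\}\ge p_w(\epsilon)$. *)

theory Defs
  imports "HOL-Analysis.Analysis" "HOL-Probability.Probability"
begin

definition hpoly :: "real^'n^'m \<Rightarrow> real^'m \<Rightarrow> (real^'n) set" where
  "hpoly Pw pw = {x. \<forall>i. (Pw *v x) $ i \<le> pw $ i}"

text \<open>Unfalsified parameter set Delta_t (t >= 1), for a fixed outcome of the disturbances.\<close>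
definition unfalsified ::
  "(nat \<Rightarrow> real^'p^'n) \<Rightarrow> real^'p \<Rightarrow> (nat \<Rightarrow> real^'n) \<Rightarrow> (real^'n) set \<Rightarrow> nat \<Rightarrow> (real^'p) set" where
  "unfalsified D thstar wseq W t = {\<theta>. D (t - 1) *v (thstar - \<theta>) + wseq (t - 1) \<in> W}"

definition param_set ::
  "(real^'p) set \<Rightarrow> (nat \<Rightarrow> real^'p^'n) \<Rightarrow> real^'p \<Rightarrow> (nat \<Rightarrow> real^'n) \<Rightarrow> (real^'n) set \<Rightarrow> nat \<Rightarrow> (real^'p) set" where
  "param_set Th0 D thstar wseq W t = Th0 \<inter> (\<Inter>j\<in>{1..t}. unfalsified D thstar wseq W j)"

end

theory Submission imports Defs begin

text \<open>
  Write \<open>x = \<theta>\<^sup>* - \<theta>\<close>. Persistent excitation forces, in every window of \<open>N\<^sub>u\<close> consecutive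
  times, some \<open>j\<close> with \<open>\<parallel>D\<^sub>j x\<parallel> \<ge> \<parallel>x\<parallel> \<surd>(\<beta>/N\<^sub>u) \<ge> \<epsilon>' + \<rho>\<close>, where \<open>\<epsilon>' = \<epsilon> \<surd>(\<beta>/N\<^sub>u)\<close>.
  Let \<open>w\<^sup>0\<close> maximise \<open>\<langle>D\<^sub>j x, \<cdot>\<rangle>\<close> over \<open>\<Omega>\<close>; it lies on the frontier of \<open>\<Omega>\<close>. If \<open>\<theta>\<close> survives
  time \<open>j + 1\<close>, then \<open>D\<^sub>j x + w\<^sub>j \<in> \<Omega> \<oplus> \<rho>\<B>\<close>, and comparing inner products with \<open>D\<^sub>j x\<close> shows
  \<open>\<parallel>w\<^sub>j - w\<^sup>0\<parallel> \<ge> \<epsilon>'\<close>, an event of probability at most \<open>1 - p\<^sub>w(\<epsilon>')\<close>. One such time per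
  window and independence of the disturbances give the power \<open>\<lfloor>t/N\<^sub>u\<rfloor>\<close>.
\<close>

lemma sum_matrix_vector_mult:
  "sum f S *v (x :: 'a :: comm_semiring_1^'n) = (\<Sum>j\<in>S. (f j :: 'a^'n^'m) *v x)"
proof (cases "finite S")
  case True
  then show ?thesis
    by (induction S rule: finite_induct) (auto simp: matrix_vector_mult_add_rdistrib)
qed simp

lemma gram_quadratic_form: "((transpose A ** A) *v x) \<bullet> x = (norm ((A :: real^'n^'m) *v x))\<^sup>2"
  by (simp add: matrix_vector_mul_assoc[symmetric] dot_lmul_matrix power2_norm_eq_inner)

lemma exists_ge_average:
  fixes f :: "'a \<Rightarrow> real"
  assumes "finite S" "S \<noteq> {}" "c \<le> sum f S"
  shows "\<exists>j\<in>S. c / card S \<le> f j"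
proof (rule ccontr)
  assume "\<not> ?thesis"
  then have "sum f S < (\<Sum>j\<in>S. c / card S)"
    using assms by (intro sum_strict_mono) auto
  also have "\<dots> = c" using assms by simp
  finally show False using assms by simp
qed

lemma persistent_excitation_exists_large_regressor:
  fixes D :: "'i \<Rightarrow> real^'p^'n"
  assumes "finite S" "S \<noteq> {}" "0 \<le> \<beta>"
    and "\<beta> * (x \<bullet> x) \<le> ((\<Sum>j\<in>S. transpose (D j) ** D j) *v x) \<bullet> x"
  shows "\<exists>j\<in>S. sqrt (\<beta> / card S) * norm x \<le> norm (D j *v x)"
proof -
  have "\<beta> * (x \<bullet> x) \<le> (\<Sum>j\<in>S. (norm (D j *v x))\<^sup>2)"
    using assms(4) by (simp add: sum_matrix_vector_mult inner_sum_left gram_quadratic_form)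
  then obtain j where "j \<in> S" and j: "\<beta> * (x \<bullet> x) / card S \<le> (norm (D j *v x))\<^sup>2"
    using exists_ge_average[OF assms(1,2)] by blast
  have "0 \<le> \<beta> / card S" using assms(3) by simp
  then have "(sqrt (\<beta> / card S) * norm x)\<^sup>2 = \<beta> * (x \<bullet> x) / card S"
    by (simp only: power_mult_distrib real_sqrt_pow2 power2_norm_eq_inner times_divide_eq_left)
  then have "(sqrt (\<beta> / card S) * norm x)\<^sup>2 \<le> (norm (D j *v x))\<^sup>2" using j by linarith
  then have "sqrt (\<beta> / card S) * norm x \<le> norm (D j *v x)"
    using power2_le_imp_le norm_ge_zero by blast
  then show ?thesis using \<open>j \<in> S\<close> by blast
qed

lemma persistent_excitation_block_choice:
  fixes D :: "nat \<Rightarrow> real^'p^'n"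
  assumes "0 < N" "0 \<le> \<beta>"
    and "\<forall>k x. \<beta> * (x \<bullet> x) \<le> ((\<Sum>j\<in>{k..k + N - 1}. transpose (D j) ** D j) *v x) \<bullet> x"
  obtains g where "strict_mono g" "\<And>i. g i < Suc i * N"
    "\<And>i. sqrt (\<beta> / N) * norm x \<le> norm (D (g i) *v x)"
proof -
  have "\<exists>j\<in>{i * N..i * N + N - 1}. sqrt (\<beta> / N) * norm x \<le> norm (D j *v x)" for i
  proof -
    have "card {i * N..i * N + N - 1} = N" "{i * N..i * N + N - 1} \<noteq> {}" using assms(1) by auto
    then show ?thesis
      using persistent_excitation_exists_large_regressor[of "{i * N..i * N + N - 1}" \<beta> x D] assms(2,3)
      by simp
  qed
  then obtain g where block: "\<And>i. g i \<in> {i * N..i * N + N - 1}"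
    and large: "\<And>i. sqrt (\<beta> / N) * norm x \<le> norm (D (g i) *v x)"
    by metis
  have below: "g i < Suc i * N" for i using assms(1) block[of i] by auto
  have "strict_mono g"
  proof (rule strict_monoI_Suc)
    fix i
    show "g i < g (Suc i)" using below[of i] block[of "Suc i"] by auto
  qed
  then show thesis using below large by (rule that)
qed

lemma excitation_margin_le:
  fixes \<beta> N :: real
  assumes "0 < \<beta>" "0 < N" "\<epsilon> + \<rho> * sqrt (N / \<beta>) \<le> r"
  shows "\<epsilon> * sqrt (\<beta> / N) + \<rho> \<le> sqrt (\<beta> / N) * r"
proof -
  have "sqrt (\<beta> / N) * sqrt (N / \<beta>) = 1"
    using assms(1,2) by (simp add: real_sqrt_mult[symmetric])
  then have "\<epsilon> * sqrt (\<beta> / N) + \<rho> = sqrt (\<beta> / N) * (\<epsilon> + \<rho> * sqrt (N / \<beta>))"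
    by (simp add: distrib_left mult.left_commute[of _ \<rho>])
  also have "\<dots> \<le> sqrt (\<beta> / N) * r" using assms by (intro mult_left_mono) auto
  finally show ?thesis .
qed

lemma Suc_mult_le_of_less_div:
  fixes i t N :: nat
  assumes "i < t div N"
  shows "Suc i * N \<le> t"
proof -
  have "Suc i * N \<le> t div N * N" using assms by (intro mult_le_mono1) simp
  also have "\<dots> \<le> t" by (rule div_times_less_eq_dividend)
  finally show ?thesis .
qed

lemma param_set_imp_consistent:
  assumes "\<theta> \<in> param_set Th0 D thstar ws W t" "j < t"
  shows "D j *v (thstar - \<theta>) + ws j \<in> W"
proof -
  have "\<theta> \<in> unfalsified D thstar ws W (j + 1)"
    using assms unfolding param_set_def by auto
  then show ?thesis by (simp add: unfalsified_def)
qed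

lemma compact_inner_maximizer_in_frontier:
  fixes \<Omega> :: "'a :: real_inner set"
  assumes "compact \<Omega>" "\<Omega> \<noteq> {}" "v \<noteq> 0"
  obtains w0 where "w0 \<in> frontier \<Omega>" "\<And>y. y \<in> \<Omega> \<Longrightarrow> v \<bullet> y \<le> v \<bullet> w0"
proof -
  have "continuous_on \<Omega> (\<lambda>y. v \<bullet> y)" by (intro continuous_intros)
  then obtain w0 where "w0 \<in> \<Omega>" and max: "\<And>y. y \<in> \<Omega> \<Longrightarrow> v \<bullet> y \<le> v \<bullet> w0"
    using continuous_attains_sup[OF assms(1,2)] by blast
  have "w0 \<notin> interior \<Omega>"
  proof
    assume "w0 \<in> interior \<Omega>"
    then obtain r where "r > 0" "ball w0 r \<subseteq> \<Omega>" using mem_interior by blast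
    then have "w0 + (r / 2 / norm v) *\<^sub>R v \<in> \<Omega>"
      using assms(3) by (auto simp: dist_norm)
    moreover have "0 < r / 2 / norm v * (v \<bullet> v)"
      using \<open>r > 0\<close> assms(3) by simp
    ultimately show False
      using max by (fastforce simp: inner_add_right)
  qed
  then show ?thesis
    using that \<open>w0 \<in> \<Omega>\<close> max closure_subset by (auto simp: frontier_def)
qed

lemma far_from_inner_maximizer:
  fixes v :: "'a :: real_inner"
  assumes max: "\<And>z. z \<in> \<Omega> \<Longrightarrow> v \<bullet> z \<le> v \<bullet> w0"
    and "v + y \<in> {a + b | a b. a \<in> \<Omega> \<and> b \<in> cball 0 \<rho>}"
    and "e + \<rho> \<le> norm v"
  shows "e \<le> norm (y - w0)"
proof -
  obtain a b where ab: "v + y = a + b" "a \<in> \<Omega>" "norm b \<le> \<rho>" using assms(2) by auto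
  have "norm v * norm v + v \<bullet> y = v \<bullet> (v + y)"
    by (simp add: inner_add_right power2_norm_eq_inner[symmetric] power2_eq_square)
  also have "\<dots> = v \<bullet> a + v \<bullet> b" by (simp add: ab inner_add_right)
  also have "\<dots> \<le> v \<bullet> w0 + norm v * \<rho>"
    using max[OF ab(2)] norm_cauchy_schwarz[of v b] mult_left_mono[OF ab(3), of "norm v"] by simp
  finally have "norm v * norm v \<le> norm v * \<rho> - v \<bullet> (y - w0)" by (simp add: inner_diff_right)
  also have "\<dots> \<le> norm v * \<rho> + norm v * norm (y - w0)"
    using norm_cauchy_schwarz[of "-v" "y - w0"] by simp
  finally have "norm v * norm v \<le> norm v * (\<rho> + norm (y - w0))" by (simp add: algebra_simps)
  then have "norm v \<le> \<rho> + norm (y - w0) \<or> norm v = 0" by (auto simp: mult_le_cancel_left)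
  then show ?thesis
    using assms(3) ab(3) norm_ge_zero[of b] norm_ge_zero[of "y - w0"] by linarith
qed

lemma (in prob_space) prob_shifted_disturbance_in_le:
  fixes X :: "'a \<Rightarrow> real^'n"
  assumes "X \<in> borel_measurable M" "compact \<Omega>" "\<And>\<omega>. \<omega> \<in> space M \<Longrightarrow> X \<omega> \<in> \<Omega>"
    and "W \<subseteq> {a + b | a b. a \<in> \<Omega> \<and> b \<in> cball 0 \<rho>}"
    and near: "\<And>w0. w0 \<in> frontier \<Omega> \<Longrightarrow> q \<le> prob {\<omega>\<in>space M. norm (X \<omega> - w0) < e}"
    and "0 < e" "0 \<le> \<rho>" "e + \<rho> \<le> norm v"
  shows "prob {\<omega>\<in>space M. v + X \<omega> \<in> W} \<le> 1 - q"
proof -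
  have "\<Omega> \<noteq> {}" using assms(3) not_empty by blast
  moreover have "v \<noteq> 0" using assms(6-8) by auto
  ultimately obtain w0 where "w0 \<in> frontier \<Omega>" and max: "\<And>y. y \<in> \<Omega> \<Longrightarrow> v \<bullet> y \<le> v \<bullet> w0"
    using compact_inner_maximizer_in_frontier[OF assms(2)] by blast
  define B where "B = {\<omega>\<in>space M. norm (X \<omega> - w0) < e}"
  have "B = X -` ball w0 e \<inter> space M" by (auto simp: B_def dist_norm norm_minus_commute)
  then have "B \<in> events" using measurable_sets[OF assms(1) borel_open[OF open_ball]] by (simp only:)
  have "\<not> norm (X \<omega> - w0) < e" if "v + X \<omega> \<in> W" for \<omega>
    using far_from_inner_maximizer[OF max subsetD[OF assms(4) that] assms(8)] by simp
  then have "{\<omega>\<in>space M. v + X \<omega> \<in> W} \<subseteq> space M - B"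
    by (auto simp: B_def)
  then have "prob {\<omega>\<in>space M. v + X \<omega> \<in> W} \<le> prob (space M - B)"
    using \<open>B \<in> events\<close> by (intro finite_measure_mono) auto
  also have "\<dots> = 1 - prob B" using \<open>B \<in> events\<close> by (simp add: prob_compl)
  also have "\<dots> \<le> 1 - q" using near[OF \<open>w0 \<in> frontier \<Omega>\<close>] by (simp add: B_def)
  finally show ?thesis .
qed

lemma (in prob_space) prob_indep_vars_all_in_le:
  assumes "indep_vars M' X I" "finite J" "J \<subseteq> I" "\<And>k. k \<in> J \<Longrightarrow> B k \<in> sets (M' k)"
    and "\<And>k. k \<in> J \<Longrightarrow> prob {\<omega>\<in>space M. X k \<omega> \<in> B k} \<le> q"
  shows "prob {\<omega>\<in>space M. \<forall>k\<in>J. X k \<omega> \<in> B k} \<le> q ^ card J"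
proof (cases "J = {}")
  case False
  have "prob {\<omega>\<in>space M. \<forall>k\<in>J. X k \<omega> \<in> B k} = prob (\<Inter>k\<in>J. X k -` B k \<inter> space M)"
    using False by (intro arg_cong[where f = prob]) auto
  also have "\<dots> = (\<Prod>k\<in>J. prob (X k -` B k \<inter> space M))"
    using assms(1-4) False unfolding indep_vars_def2 by (intro indep_setsD) auto
  also have "\<dots> \<le> (\<Prod>k\<in>J. q)"
    using assms(5) by (intro prod_mono) (auto simp: Int_def conj_commute)
  finally show ?thesis by simp
qed (simp add: prob_space)

lemma (in prob_space) prob_indep_shifted_disturbances_in_le:
  fixes X :: "'i \<Rightarrow> 'a \<Rightarrow> real^'n"
  assumes "indep_vars (\<lambda>_. borel) X I" "finite J" "J \<subseteq> I"
    and "compact \<Omega>" "\<And>k \<omega>. \<omega> \<in> space M \<Longrightarrow> X k \<omega> \<in> \<Omega>"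
    and "closed W" "W \<subseteq> {a + b | a b. a \<in> \<Omega> \<and> b \<in> cball 0 \<rho>}"
    and "\<And>k w0. k \<in> J \<Longrightarrow> w0 \<in> frontier \<Omega> \<Longrightarrow> q \<le> prob {\<omega>\<in>space M. norm (X k \<omega> - w0) < e}"
    and "0 < e" "0 \<le> \<rho>" "\<And>k. k \<in> J \<Longrightarrow> e + \<rho> \<le> norm (v k)"
  shows "{\<omega>\<in>space M. \<forall>k\<in>J. v k + X k \<omega> \<in> W} \<in> events"
    and "prob {\<omega>\<in>space M. \<forall>k\<in>J. v k + X k \<omega> \<in> W} \<le> (1 - q) ^ card J"
proof -
  define B where "B k = (\<lambda>y. v k + y) -` W" for k
  have B_borel: "B k \<in> sets borel" for k
    unfolding B_def using assms(6) by (intro borel_closed closed_vimage continuous_intros)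
  have X_borel: "X k \<in> borel_measurable M" if "k \<in> J" for k
    using assms(1,3) that unfolding indep_vars_def2 by auto
  have "{\<omega>\<in>space M. \<forall>k\<in>J. X k \<omega> \<in> B k} \<in> events"
    using measurable_sets[OF X_borel B_borel] assms(2)
    by (intro sets.sets_Collect_finite_All) (auto simp: Int_def conj_commute)
  then show "{\<omega>\<in>space M. \<forall>k\<in>J. v k + X k \<omega> \<in> W} \<in> events" by (simp add: B_def)
  have "prob {\<omega>\<in>space M. \<forall>k\<in>J. X k \<omega> \<in> B k} \<le> (1 - q) ^ card J"
  proof (rule prob_indep_vars_all_in_le[OF assms(1-3)])
    fix k assume "k \<in> J"
    then have "prob {\<omega>\<in>space M. v k + X k \<omega> \<in> W} \<le> 1 - q"
      using assms(4,5,7-11) X_borel by (intro prob_shifted_disturbance_in_le[where e = e]) auto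
    then show "prob {\<omega>\<in>space M. X k \<omega> \<in> B k} \<le> 1 - q" by (simp add: B_def)
  qed (use B_borel in auto)
  then show "prob {\<omega>\<in>space M. \<forall>k\<in>J. v k + X k \<omega> \<in> W} \<le> (1 - q) ^ card J"
    by (simp add: B_def)
qed

theorem theorem4:
  fixes M :: "'w measure"
    and w :: "nat \<Rightarrow> 'w \<Rightarrow> real^'n"
    and D :: "nat \<Rightarrow> real^'p^'n"
    and thstar :: "real^'p"
    and Th0 :: "(real^'p) set"
    and Pw :: "real^'n^'m" and pw :: "real^'m"
    and \<Omega> :: "(real^'n) set"
    and \<rho> \<tau> \<beta> :: real and Nu :: nat
    and p_w :: "real \<Rightarrow> real"
    and \<epsilon> :: real and \<theta> :: "real^'p" and t :: nat
  assumes "prob_space M"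
    and "\<And>k. w k \<in> borel_measurable M"
    and "prob_space.indep_vars M (\<lambda>_. borel) w UNIV"
    and "polytope Th0" and "compact Th0" and "convex Th0" and "thstar \<in> Th0"
    and "compact (hpoly Pw pw)" and "\<forall>i. pw $ i > 0"
    \<comment> \<open>persistent excitation\<close>
    and "\<tau> > 0" and "\<beta> > 0"
    and "Nu \<ge> nat \<lceil>real CARD('p) / real CARD('n)\<rceil>"
    and "\<forall>k. onorm (\<lambda>x. D k *v x) \<le> \<tau>"
    and "\<forall>k. \<forall>x. ((\<Sum>j\<in>{k..k + Nu - 1}. transpose (D j) ** D j) *v x) \<bullet> x \<ge> \<beta> * (x \<bullet> x)"
    \<comment> \<open>inexact disturbance bound\<close>
    and "compact \<Omega>" and "\<rho> > 0"
    and "\<Omega> \<subseteq> hpoly Pw pw"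
    and "hpoly Pw pw \<subseteq> {a + b | a b. a \<in> \<Omega> \<and> b \<in> cball 0 \<rho>}"
    and "\<forall>k. \<forall>\<omega>\<in>space M. w k \<omega> \<in> \<Omega>"
    and "\<forall>e>0. 0 < p_w e \<and> p_w e \<le> 1"
    and "\<forall>w0\<in>frontier \<Omega>. \<forall>e>0. \<forall>k.
           measure M {\<omega>\<in>space M. norm (w k \<omega> - w0) < e} \<ge> p_w e"
    \<comment> \<open>the claim's data\<close>
    and "\<epsilon> > 0" and "\<theta> \<in> Th0"
    and "norm (\<theta> - thstar) \<ge> \<epsilon> + \<rho> * sqrt (real Nu / \<beta>)"
  shows "measure M {\<omega>\<in>space M. \<theta> \<in> param_set Th0 D thstar (\<lambda>k. w k \<omega>) (hpoly Pw pw) t}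
           \<le> (1 - p_w (\<epsilon> * sqrt (\<beta> / real Nu))) ^ (t div Nu)"
proof -
  interpret prob_space M by fact
  define x where "x = thstar - \<theta>"
  define e' where "e' = \<epsilon> * sqrt (\<beta> / Nu)"
  define K where "K = t div Nu"
  have "0 < real CARD('p) / real CARD('n)" by simp
  then have "0 < Nu" using assms(12) by linarith
  then obtain g where "strict_mono g" and g_below: "\<And>i. g i < Suc i * Nu"
    and g_large: "\<And>i. sqrt (\<beta> / Nu) * norm x \<le> norm (D (g i) *v x)"
    using persistent_excitation_block_choice[OF _ _ assms(14)] assms(11) by (metis less_imp_le)
  define E where "E = {\<omega>\<in>space M. \<forall>k\<in>g ` {..<K}. D k *v x + w k \<omega> \<in> hpoly Pw pw}"
  have "e' + \<rho> \<le> sqrt (\<beta> / Nu) * norm x"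
    using excitation_margin_le assms(11,24) \<open>0 < Nu\<close> by (simp add: e'_def x_def norm_minus_commute)
  then have margin: "e' + \<rho> \<le> norm (D k *v x)" if "k \<in> g ` {..<K}" for k
    using g_large that by (auto intro: order_trans)
  have "g i < t" if "i < K" for i
    using g_below[of i] Suc_mult_le_of_less_div[of i t Nu] that by (simp add: K_def)
  then have "{\<omega>\<in>space M. \<theta> \<in> param_set Th0 D thstar (\<lambda>k. w k \<omega>) (hpoly Pw pw) t} \<subseteq> E"
    by (auto simp: E_def x_def intro!: param_set_imp_consistent)
  have "0 < e'" using assms(11,22) \<open>0 < Nu\<close> by (simp add: e'_def)
  then have near: "p_w e' \<le> prob {\<omega>\<in>space M. norm (w k \<omega> - w0) < e'}"
    if "k \<in> g ` {..<K}" "w0 \<in> frontier \<Omega>" for k w0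
    using assms(21) that(2) by blast
  have w_in: "w k \<omega> \<in> \<Omega>" if "\<omega> \<in> space M" for k \<omega> using assms(19) that by blast
  note E_facts = prob_indep_shifted_disturbances_in_le[where J = "g ` {..<K}" and v = "\<lambda>k. D k *v x",
      OF assms(3) finite_imageI[OF finite_lessThan] subset_UNIV assms(15) w_in
      compact_imp_closed[OF assms(8)] assms(18) near \<open>0 < e'\<close> less_imp_le[OF assms(16)] margin,
      folded E_def]
  have "prob {\<omega>\<in>space M. \<theta> \<in> param_set Th0 D thstar (\<lambda>k. w k \<omega>) (hpoly Pw pw) t} \<le> prob E"
    using \<open>_ \<subseteq> E\<close> E_facts(1) by (rule finite_measure_mono)
  also have "\<dots> \<le> (1 - p_w e') ^ card (g ` {..<K})" by (rule E_facts(2))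
  also have "card (g ` {..<K}) = K"
    using \<open>strict_mono g\<close> by (simp add: card_image strict_mono_imp_inj_on)
  finally show ?thesis by (simp add: K_def e'_def)
qed

end
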